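(* Let $M$ be a dihedral axial decomposition algebra of Majorana type $(\eta,\eta)$ over a field $\mathbb{F}$ with $\operatorname{char}\mathbb{F}\neq2$, where $\eta\in\mathbb{F}\setminus\{0,1,\tfrac12\}$, with generating axes $(a_i)_{i\in\mathbb{Z}}$. Let $x,y,z\in M$ satisfy (i) $g(x)=x$ for all $g\in G$; (ii) $f_3(y)=y$, $\tau_0\circ f_1(y)=f_2(y)$ and $\tau_0(y)=y$; (iii) $\tau_0(z)=z$ and $\tau_0\circ f_1(z)=f_1(z)$; (iv) $x+y+z+\sum_{i=1}^k\alpha_i(a_i+a_{-i})+\alpha_0a_0=0$ for some $\alpha_0,\dots,\alpha_k\in\mathbb{F}$. Set $\alpha_i=0$ for $i>k$. Then: (1) $\alpha_k(a_{k+2}-a_{-k-2})+\sum_{i=1}^{k+1}(\alpha_{i-2}+\alpha_{i-1}-\alpha_{i+1}-\alpha_{i+2})(a_i-a_{-i})=0$, where $\alpha_{-1}=\alpha_1$. Thus if $\alpha_k\neq0$, then $\operatorname{adim}\le2k+4$, and if $\operatorname{adim}=2k+4$ then $M$ satisfies an odd relation. (2) If $y=0$, then $\alpha_k(a_{k+1}-a_{-k-1})+\sum_{i=1}^k(\alpha_{i-1}-\alpha_{i+1})(a_i-a_{-i})=0$. Thus if $\alpha_k\neq0$, then $\operatorname{adim}\le2k+2$, and if $\operatorname{adim}=2k+2$ then $M$ satisfies an odd relation. (3) If $y=z=0$, then $\alpha_k(a_{k+1}-a_{-k})+\sum_{i=0}^{k-1}(\alpha_i-\alpha_{i+1})(a_{i+1}-a_{-i})=0$.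 Thus if $\alpha_k\neq0$, then $\operatorname{adim}\le2k+1$, and if $\operatorname{adim}=2k+1$ then $M$ satisfies an odd relation.
   Context: $M$ is a commutative nonassociative $\mathbb{F}$-algebra. With $\Phi(0)=0,\Phi(1)=1,\Phi(2)=\Phi(3)=\eta$, an axis $a\in M$ is an element together with a decomposition $M=\bigoplus_{i=0}^3M^i(a)$ such that $xa=\Phi(i)x$ for $x\in M^i(a)$, $M^1(a)=\mathbb{F}a$, and $M^0(a)M^i(a)\subset M^i(a)$ for all $i$, $M^2(a)M^2(a)\subset M^0(a)\oplus M^1(a)$, $M^2(a)M^3(a)\subset M^3(a)$, $M^3(a)M^3(a)\subset M^0(a)\oplus M^1(a)\oplus M^2(a)$. The Miyamoto involution $\tau(a)$ is the automorphism acting as $1$ on $M^0(a)\oplus M^1(a)\oplus M^2(a)$ and $-1$ on $M^3(a)$. $M$ is dihedral (of Majorana type $(\eta,\eta)$) with axes $(a_i)_{i\in\mathbb{Z}}$ if: $M$ is generated by the $a_i$; $a_i\mapsto a_{i+1}$ extends to an automorphism of $M$; and $\tau(a_j)(a_i)=a_{2j-i}$ for all $i,j$. Notation: $f_i$ is the automorphism with $f_i(a_j)=a_{i+j}$ for all $j$; $\tau_0=\tau(a_0)$; $G=\langle f_1,\tau_0\rangle$. The axial dimension $\operatorname{adim}$ is $\dim_{\mathbb{F}}\operatorname{Span}\{a_i:i\in\mathbb{Z}\}$. $M$ satisfies an odd relation if either $\operatorname{adim}=2m$ and there are $\beta_1,\dots,\beta_m\in\mathbb{F}$ with $\beta_m\neq0$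 and $\sum_{i=1}^m\beta_i(a_i-a_{-i})=0$, or $\operatorname{adim}=2m+1$ and there are $\beta_0,\dots,\beta_m\in\mathbb{F}$ with $\beta_m\neq0$ and $\sum_{i=0}^m\beta_i(a_{i+1}-a_{-i})=0$. *)

theory Defs
  imports Main "HOL-Library.Extended_Nat"
begin

definition comm_algebra ::
  "('f::field \<Rightarrow> 'm::ab_group_add \<Rightarrow> 'm) \<Rightarrow> ('m \<Rightarrow> 'm \<Rightarrow> 'm) \<Rightarrow> bool" where
  "comm_algebra smul mult \<longleftrightarrow>
     vector_space smul \<and>
     (\<forall>x y. mult x y = mult y x) \<and>
     (\<forall>x y z. mult (x + y) z = mult x z + mult y z) \<and>
     (\<forall>c x y. mult (smul c x) y = smul c (mult x y))"

definition Phi :: "'f::field \<Rightarrow> nat \<Rightarrow> 'f" where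
  "Phi eta i = (if i = 0 then 0 else if i = 1 then 1 else eta)"

definition setprod :: "('m \<Rightarrow> 'm \<Rightarrow> 'm) \<Rightarrow> 'm set \<Rightarrow> 'm set \<Rightarrow> 'm set" where
  "setprod mult A B = {mult u v | u v. u \<in> A \<and> v \<in> B}"

definition setsum :: "'m::ab_group_add set \<Rightarrow> 'm set \<Rightarrow> 'm set" where
  "setsum A B = {u + v | u v. u \<in> A \<and> v \<in> B}"

definition is_axis ::
  "('f::field \<Rightarrow> 'm::ab_group_add \<Rightarrow> 'm) \<Rightarrow> ('m \<Rightarrow> 'm \<Rightarrow> 'm) \<Rightarrow> 'f \<Rightarrow> 'm \<Rightarrow> (nat \<Rightarrow> 'm set) \<Rightarrow> bool" where
  "is_axis smul mult eta a V \<longleftrightarrow>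
     (\<forall>j<4. module.subspace smul (V j)) \<and>
     (\<forall>x. \<exists>!v. (\<forall>j<4. v j \<in> V j) \<and> (\<forall>j\<ge>4. v j = 0) \<and> x = v 0 + v 1 + v 2 + v 3) \<and>
     (\<forall>j<4. \<forall>x\<in>V j. mult x a = smul (Phi eta j) x) \<and>
     V 1 = {smul c a | c. True} \<and>
     (\<forall>j<4. setprod mult (V 0) (V j) \<subseteq> V j) \<and>
     setprod mult (V 2) (V 2) \<subseteq> setsum (V 0) (V 1) \<and>
     setprod mult (V 2) (V 3) \<subseteq> V 3 \<and>
     setprod mult (V 3) (V 3) \<subseteq> setsum (setsum (V 0) (V 1)) (V 2)"

definition miyamoto :: "(nat \<Rightarrow> 'm::ab_group_add set) \<Rightarrow> 'm \<Rightarrow> 'm" where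
  "miyamoto V x = (THE y. \<exists>v0 v1 v2 v3. v0 \<in> V 0 \<and> v1 \<in> V 1 \<and> v2 \<in> V 2 \<and> v3 \<in> V 3 \<and>
       x = v0 + v1 + v2 + v3 \<and> y = v0 + v1 + v2 - v3)"

definition is_automorphism ::
  "('f::field \<Rightarrow> 'm::ab_group_add \<Rightarrow> 'm) \<Rightarrow> ('m \<Rightarrow> 'm \<Rightarrow> 'm) \<Rightarrow> ('m \<Rightarrow> 'm) \<Rightarrow> bool" where
  "is_automorphism smul mult g \<longleftrightarrow> bij g \<and> (\<forall>x y. g (x + y) = g x + g y) \<and>
     (\<forall>c x. g (smul c x) = smul c (g x)) \<and> (\<forall>x y. g (mult x y) = mult (g x) (g y))"

inductive_set gen_subalg for smul :: "'f::field \<Rightarrow> 'm::ab_group_add \<Rightarrow> 'm"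
    and mult :: "'m \<Rightarrow> 'm \<Rightarrow> 'm" and S :: "'m set" where
  base: "s \<in> S \<Longrightarrow> s \<in> gen_subalg smul mult S"
| zero: "0 \<in> gen_subalg smul mult S"
| add: "u \<in> gen_subalg smul mult S \<Longrightarrow> v \<in> gen_subalg smul mult S \<Longrightarrow> u + v \<in> gen_subalg smul mult S"
| scale: "u \<in> gen_subalg smul mult S \<Longrightarrow> smul c u \<in> gen_subalg smul mult S"
| mult: "u \<in> gen_subalg smul mult S \<Longrightarrow> v \<in> gen_subalg smul mult S \<Longrightarrow> mult u v \<in> gen_subalg smul mult S"

definition shift_aut ::
  "('f::field \<Rightarrow> 'm::ab_group_add \<Rightarrow> 'm) \<Rightarrow> ('m \<Rightarrow> 'm \<Rightarrow> 'm) \<Rightarrow> (int \<Rightarrow> 'm) \<Rightarrow> int \<Rightarrow> 'm \<Rightarrow> 'm" where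
  "shift_aut smul mult a i = (THE g. is_automorphism smul mult g \<and> (\<forall>j. g (a j) = a (i + j)))"

definition dihedral ::
  "('f::field \<Rightarrow> 'm::ab_group_add \<Rightarrow> 'm) \<Rightarrow> ('m \<Rightarrow> 'm \<Rightarrow> 'm) \<Rightarrow> 'f \<Rightarrow> (int \<Rightarrow> 'm) \<Rightarrow> (int \<Rightarrow> nat \<Rightarrow> 'm set) \<Rightarrow> bool" where
  "dihedral smul mult eta a V \<longleftrightarrow>
     comm_algebra smul mult \<and>
     (\<forall>i. is_axis smul mult eta (a i) (V i)) \<and>
     gen_subalg smul mult (range a) = UNIV \<and>
     (\<exists>g. is_automorphism smul mult g \<and> (\<forall>i. g (a i) = a (i + 1))) \<and>
     (\<forall>i j. miyamoto (V j) (a i) = a (2 * j - i))"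

inductive_set gen_group :: "('m \<Rightarrow> 'm) set \<Rightarrow> ('m \<Rightarrow> 'm) set" for S where
  one: "id \<in> gen_group S"
| gen: "s \<in> S \<Longrightarrow> s \<in> gen_group S"
| inv: "s \<in> S \<Longrightarrow> inv s \<in> gen_group S"
| comp: "g \<in> gen_group S \<Longrightarrow> h \<in> gen_group S \<Longrightarrow> g \<circ> h \<in> gen_group S"

definition adim :: "('f::field \<Rightarrow> 'm::ab_group_add \<Rightarrow> 'm) \<Rightarrow> (int \<Rightarrow> 'm) \<Rightarrow> enat" where
  "adim smul a = (if \<exists>B. finite B \<and> \<not> module.dependent smul B \<and>
                        module.span smul B = module.span smul (range a)
                  then enat (vector_space.dim smul (range a)) else \<infinity>)"

definition odd_relation :: "('f::field \<Rightarrow> 'm::ab_group_add \<Rightarrow> 'm) \<Rightarrow> (int \<Rightarrow> 'm) \<Rightarrow> bool" where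
  "odd_relation smul a \<longleftrightarrow>
     (\<exists>m::nat. m \<ge> 1 \<and> adim smul a = enat (2 * m) \<and>
        (\<exists>\<beta>::nat \<Rightarrow> 'f. \<beta> m \<noteq> 0 \<and>
           (\<Sum>i = 1..m. smul (\<beta> i) (a (int i) - a (- int i))) = 0)) \<or>
     (\<exists>m::nat. adim smul a = enat (2 * m + 1) \<and>
        (\<exists>\<beta>::nat \<Rightarrow> 'f. \<beta> m \<noteq> 0 \<and>
           (\<Sum>i = 0..m. smul (\<beta> i) (a (int i + 1) - a (- int i))) = 0))"

end

theory Submission
  imports Defs "HOL-Library.Groups_Big_Fun"
begin

text \<open>
  Extend \<open>\<alpha>\<close> evenly to \<open>\<beta>\<^sub>j = \<alpha>\<^sub>|\<^sub>j\<^sub>|\<close>, so that (iv) reads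
  \<open>x + y + z + \<Sum>\<^sub>j \<beta>\<^sub>j a\<^sub>j = 0\<close>. The shift automorphism \<open>f\<^sub>s\<close> acts on such a combination
  by shifting its coefficients, \<open>f\<^sub>s (\<Sum>\<^sub>j \<beta>\<^sub>j a\<^sub>j) = \<Sum>\<^sub>j \<beta>\<^sub>j\<^sub>-\<^sub>s a\<^sub>j\<close>.
  The hypotheses on \<open>x, y, z\<close> say that \<open>f\<^sub>1 + f\<^sub>2 - f\<^sub>-\<^sub>1 - f\<^sub>-\<^sub>2\<close> kills \<open>x + y + z\<close>, that
  \<open>f\<^sub>1 - f\<^sub>-\<^sub>1\<close> does so if \<open>y = 0\<close>, and that \<open>f\<^sub>1 - id\<close> does so if \<open>y = z = 0\<close>; for \<open>y\<close>
  and \<open>z\<close> this uses \<open>\<tau>\<^sub>0 f\<^sub>i = f\<^sub>-\<^sub>i \<tau>\<^sub>0\<close>, which holds because the fusion rules make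
  \<open>\<tau>\<^sub>0\<close> an algebra automorphism and automorphisms are determined by their values on the
  generating axes. Applying the operator to (iv) leaves a combination of axes whose
  coefficients are odd under \<open>j \<mapsto> -j\<close> (resp. \<open>j \<mapsto> 1 - j\<close>): this is the stated relation,
  with outermost coefficient \<open>\<alpha>\<^sub>k\<close>. If \<open>\<alpha>\<^sub>k \<noteq> 0\<close>, the outermost axis lies in the span of a window
  of consecutive axes; that span is then invariant under \<open>f\<^sub>1\<close> and \<open>f\<^sub>-\<^sub>1\<close>, hence contains every
  axis, which bounds the axial dimension, and in the extremal case the relation is itself
  an odd relation.
\<close>

locale nonassoc_comm_algebra = vector_space smul
  for smul :: "'f::field \<Rightarrow> 'm::ab_group_add \<Rightarrow> 'm" +
  fixes mult :: "'m \<Rightarrow> 'm \<Rightarrow> 'm"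
  assumes mult_commute: "mult x y = mult y x"
    and mult_add_left: "mult (x + y) z = mult x z + mult y z"
    and mult_scale_left: "mult (smul c x) y = smul c (mult x y)"
begin

lemma mult_add_right: "mult z (x + y) = mult z x + mult z y"
  by (metis mult_add_left mult_commute)

lemma mult_diff_left: "mult (x - y) z = mult x z - mult y z"
  using mult_add_left[of "x - y" y z] by (simp add: algebra_simps)

lemma mult_diff_right: "mult z (x - y) = mult z x - mult z y"
  by (metis mult_diff_left mult_commute)

lemma module_hom_mult_left: "module_hom smul smul (\<lambda>u. mult u v)"
  by (simp add: module_hom_iff module_axioms mult_add_left mult_scale_left)

lemma mult_span_span:
  assumes "subspace S" "\<And>u v. u \<in> A \<Longrightarrow> v \<in> B \<Longrightarrow> mult u v \<in> S"
    and "u \<in> span A" "v \<in> span B"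
  shows "mult u v \<in> S"
proof -
  have preimage: "subspace {u. mult u v \<in> S}" for v
    using module_hom.subspace_vimage[OF module_hom_mult_left \<open>subspace S\<close>] by (simp add: vimage_def)
  have "mult u v \<in> S" if "u \<in> A" for u
  proof -
    have "B \<subseteq> {v. mult u v \<in> S}" using assms(2) that by blast
    moreover have "subspace {v. mult u v \<in> S}"
      using preimage[of u] by (simp add: mult_commute)
    ultimately show ?thesis using span_minimal \<open>v \<in> span B\<close> by blast
  qed
  then have "A \<subseteq> {u. mult u v \<in> S}" by blast
  then show ?thesis using span_minimal[OF _ preimage] \<open>u \<in> span A\<close> by blast
qed

definition alg_hom :: "('m \<Rightarrow> 'm) \<Rightarrow> bool" where
  "alg_hom g \<longleftrightarrow> module_hom smul smul g \<and> (\<forall>x y. g (mult x y) = mult (g x) (g y))"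

lemma alg_hom_comp: "alg_hom g \<Longrightarrow> alg_hom h \<Longrightarrow> alg_hom (g \<circ> h)"
  unfolding alg_hom_def by (auto intro: module_hom_compose)

lemma alg_hom_id: "alg_hom id"
  unfolding alg_hom_def by (simp add: module_hom_iff module_axioms)

lemma automorphism_alg_hom: "is_automorphism smul mult g \<Longrightarrow> alg_hom g"
  unfolding is_automorphism_def alg_hom_def by (simp add: module_hom_iff module_axioms)

lemma alg_hom_eq_on_gen_subalg:
  assumes "alg_hom g" "alg_hom h" "\<And>s. s \<in> S \<Longrightarrow> g s = h s"
    and "u \<in> gen_subalg smul mult S"
  shows "g u = h u"
  using assms(4)
proof induction
  case zero
  show ?case using assms(1,2) unfolding alg_hom_def by (metis module_hom.zero)
qed (use assms in \<open>simp_all add: alg_hom_def module_hom_iff\<close>)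

end

section \<open>Axes and their Miyamoto involutions\<close>

definition even_part :: "(nat \<Rightarrow> 'm::ab_group_add set) \<Rightarrow> 'm set" where
  "even_part W = setsum (setsum (W 0) (W 1)) (W 2)"

locale axis = nonassoc_comm_algebra smul mult
  for smul :: "'f::field \<Rightarrow> 'm::ab_group_add \<Rightarrow> 'm" and mult +
  fixes eta :: 'f and b :: 'm and W :: "nat \<Rightarrow> 'm set"
  assumes is_axis: "is_axis smul mult eta b W"
begin

lemma subspace_eigenspace: "j < 4 \<Longrightarrow> subspace (W j)"
  using is_axis unfolding is_axis_def by (elim conjE) blast

lemma eigenspace_mult_axis: "j < 4 \<Longrightarrow> u \<in> W j \<Longrightarrow> mult u b = smul (Phi eta j) u"
  using is_axis unfolding is_axis_def by (elim conjE) blast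

lemma eigenspace_1: "W 1 = {smul c b | c. True}"
  using is_axis unfolding is_axis_def by (elim conjE) assumption

lemma fusion_rules:
  shows "j < 4 \<Longrightarrow> setprod mult (W 0) (W j) \<subseteq> W j"
    and "setprod mult (W 2) (W 2) \<subseteq> setsum (W 0) (W 1)"
    and "setprod mult (W 2) (W 3) \<subseteq> W 3"
    and "setprod mult (W 3) (W 3) \<subseteq> even_part W"
  using is_axis unfolding is_axis_def even_part_def by (elim conjE; simp only:)+

lemma mult_eigenspace_0: "j < 4 \<Longrightarrow> u \<in> W 0 \<Longrightarrow> v \<in> W j \<Longrightarrow> mult u v \<in> W j"
  using fusion_rules(1) unfolding setprod_def by blast

lemma mult_eigenspace_22: "u \<in> W 2 \<Longrightarrow> v \<in> W 2 \<Longrightarrow> mult u v \<in> setsum (W 0) (W 1)"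
  using fusion_rules(2) unfolding setprod_def by blast

lemma mult_eigenspace_23: "u \<in> W 2 \<Longrightarrow> v \<in> W 3 \<Longrightarrow> mult u v \<in> W 3"
  using fusion_rules(3) unfolding setprod_def by blast

lemma mult_eigenspace_33: "u \<in> W 3 \<Longrightarrow> v \<in> W 3 \<Longrightarrow> mult u v \<in> even_part W"
  using fusion_rules(4) unfolding setprod_def by blast

lemma mult_eigenspace_1:
  assumes "j < 4" "u \<in> W 1" "v \<in> W j"
  shows "mult u v \<in> W j"
proof -
  obtain c where "u = smul c b" using assms(2) eigenspace_1 by blast
  then have "mult u v = smul c (mult v b)" by (metis mult_scale_left mult_commute)
  also have "\<dots> = smul c (smul (Phi eta j) v)" using eigenspace_mult_axis[OF assms(1,3)] by simp
  finally show ?thesis using subspace_eigenspace[OF assms(1)] assms(3) by (simp add: subspace_scale)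
qed

lemma mult_eigenspace_01: "u \<in> W 0 \<union> W 1 \<Longrightarrow> j < 4 \<Longrightarrow> v \<in> W j \<Longrightarrow> mult u v \<in> W j"
  using mult_eigenspace_0 mult_eigenspace_1 by blast

lemma even_part_eq_span: "even_part W = span (W 0 \<union> W 1 \<union> W 2)"
proof -
  have setsum_subspaces: "setsum A B = span (A \<union> B)" if "subspace A" "subspace B" for A B
    unfolding setsum_def span_Un
    by (simp add: span_eq_iff[THEN iffD2, OF that(1)] span_eq_iff[THEN iffD2, OF that(2)])
  have "even_part W = span (span (W 0 \<union> W 1) \<union> W 2)"
    unfolding even_part_def by (simp add: setsum_subspaces subspace_eigenspace)
  also have "\<dots> = span (W 0 \<union> W 1 \<union> W 2)"
    unfolding span_Un[of "span (W 0 \<union> W 1)"] span_Un[of "W 0 \<union> W 1" "W 2"] span_span ..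
  finally show ?thesis .
qed

lemma mult_even_even:
  assumes "u \<in> even_part W" "v \<in> even_part W"
  shows "mult u v \<in> even_part W"
proof -
  have even_span: "even_part W = span (W 0 \<union> W 1 \<union> W 2)" by (rule even_part_eq_span)
  then have even_sub: "W 0 \<union> W 1 \<union> W 2 \<subseteq> even_part W" and "subspace (even_part W)"
    by (simp_all add: span_superset)
  have generators: "mult u v \<in> even_part W"
    if "u \<in> W 0 \<union> W 1 \<union> W 2" "v \<in> W 0 \<union> W 1 \<union> W 2" for u v
  proof -
    have "(0::nat) < 4" "(1::nat) < 4" "(2::nat) < 4" by simp_all
    then have low: "mult u v \<in> W 0 \<union> W 1 \<union> W 2"
      if "u \<in> W 0 \<union> W 1" "v \<in> W 0 \<union> W 1 \<union> W 2" for u v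
      using that mult_eigenspace_01 by blast
    have "setsum (W 0) (W 1) \<subseteq> even_part W"
      unfolding setsum_def using even_sub subspace_add[OF \<open>subspace (even_part W)\<close>] by blast
    then have "mult u v \<in> even_part W" if "u \<in> W 2" "v \<in> W 2"
      using that mult_eigenspace_22 by blast
    then show ?thesis
      using that low[of u v] low[of v u] mult_commute[of u v] even_sub by auto
  qed
  show ?thesis
    by (rule mult_span_span[OF \<open>subspace (even_part W)\<close> generators])
      (use assms even_span in simp_all)
qed

lemma mult_even_odd:
  assumes "u \<in> even_part W" "v \<in> W 3"
  shows "mult u v \<in> W 3"
proof (rule mult_span_span)
  show "subspace (W 3)" by (simp add: subspace_eigenspace)
  show "u \<in> span (W 0 \<union> W 1 \<union> W 2)" using assms(1) even_part_eq_span by simp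
  show "v \<in> span (W 3)" using assms(2) by (rule span_base)
  show "mult u' v' \<in> W 3" if "u' \<in> W 0 \<union> W 1 \<union> W 2" "v' \<in> W 3" for u' v'
    using that mult_eigenspace_01[of u' 3 v'] mult_eigenspace_23[of u' v'] by fastforce
qed

lemma even_part_memE:
  assumes "e \<in> even_part W"
  obtains e0 e1 e2 where "e0 \<in> W 0" "e1 \<in> W 1" "e2 \<in> W 2" "e = e0 + e1 + e2"
  using assms unfolding even_part_def setsum_def by blast

lemma even_part_memI: "e0 \<in> W 0 \<Longrightarrow> e1 \<in> W 1 \<Longrightarrow> e2 \<in> W 2 \<Longrightarrow> e0 + e1 + e2 \<in> even_part W"
  unfolding even_part_def setsum_def by blast

lemma subspace_even_part: "subspace (even_part W)"
  by (simp add: even_part_eq_span)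

lemma eigen_decomposition:
  "\<exists>!v. (\<forall>j<4. v j \<in> W j) \<and> (\<forall>j\<ge>4. v j = 0) \<and> x = v 0 + v 1 + v 2 + v 3"
  using is_axis unfolding is_axis_def by (elim conjE; simp only:)

lemma even_odd_decomposition: "\<exists>e u. e \<in> even_part W \<and> u \<in> W 3 \<and> x = e + u"
proof -
  obtain v where "\<forall>j<4. v j \<in> W j" "x = v 0 + v 1 + v 2 + v 3"
    using eigen_decomposition[of x] by blast
  then show ?thesis using even_part_memI[of "v 0" "v 1" "v 2"] by force
qed

lemma odd_component_unique:
  assumes "e \<in> even_part W" "e' \<in> even_part W" "u \<in> W 3" "u' \<in> W 3" "e + u = e' + u'"
  shows "u = u'"
proof -
  have lt4: "j < 4 \<longleftrightarrow> j = 0 \<or> j = 1 \<or> j = 2 \<or> j = 3" for j :: nat by auto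
  obtain e0 e1 e2 where e: "e0 \<in> W 0" "e1 \<in> W 1" "e2 \<in> W 2" "e = e0 + e1 + e2"
    using assms(1) by (rule even_part_memE)
  obtain e0' e1' e2' where e': "e0' \<in> W 0" "e1' \<in> W 1" "e2' \<in> W 2" "e' = e0' + e1' + e2'"
    using assms(2) by (rule even_part_memE)
  define v where "v j = (if j = 0 then e0 else if j = 1 then e1 else if j = 2 then e2
    else if j = 3 then u else 0)" for j :: nat
  define v' where "v' j = (if j = 0 then e0' else if j = 1 then e1' else if j = 2 then e2'
    else if j = 3 then u' else 0)" for j :: nat
  have "(\<forall>j<4. v j \<in> W j) \<and> (\<forall>j\<ge>4. v j = 0) \<and> e + u = v 0 + v 1 + v 2 + v 3"
    using e assms(3) unfolding v_def lt4 by auto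
  moreover have "(\<forall>j<4. v' j \<in> W j) \<and> (\<forall>j\<ge>4. v' j = 0) \<and> e + u = v' 0 + v' 1 + v' 2 + v' 3"
    using e' assms(4,5) unfolding v'_def lt4 by auto
  ultimately have "v = v'" using eigen_decomposition[of "e + u"] by blast
  then show ?thesis using fun_cong[of v v' 3] unfolding v_def v'_def by simp
qed

lemma miyamoto_even_odd:
  assumes "e \<in> even_part W" "u \<in> W 3"
  shows "miyamoto W (e + u) = e - u"
  unfolding miyamoto_def
proof (rule the_equality)
  obtain e0 e1 e2 where "e0 \<in> W 0" "e1 \<in> W 1" "e2 \<in> W 2" "e = e0 + e1 + e2"
    using assms(1) by (rule even_part_memE)
  then show "\<exists>v0 v1 v2 v3. v0 \<in> W 0 \<and> v1 \<in> W 1 \<and> v2 \<in> W 2 \<and> v3 \<in> W 3 \<and>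
      e + u = v0 + v1 + v2 + v3 \<and> e - u = v0 + v1 + v2 - v3"
    using assms(2) by blast
next
  fix y
  assume "\<exists>v0 v1 v2 v3. v0 \<in> W 0 \<and> v1 \<in> W 1 \<and> v2 \<in> W 2 \<and> v3 \<in> W 3 \<and>
      e + u = v0 + v1 + v2 + v3 \<and> y = v0 + v1 + v2 - v3"
  then obtain v0 v1 v2 v3 where v: "v0 \<in> W 0" "v1 \<in> W 1" "v2 \<in> W 2" "v3 \<in> W 3"
      "e + u = (v0 + v1 + v2) + v3" "y = v0 + v1 + v2 - v3"
    by blast
  then have "u = v3"
    using odd_component_unique assms even_part_memI by blast
  with v show "y = e - u" by (simp add: algebra_simps)
qed

lemma miyamoto_add: "miyamoto W (x + y) = miyamoto W x + miyamoto W y"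
proof -
  obtain e u where x: "e \<in> even_part W" "u \<in> W 3" "x = e + u"
    using even_odd_decomposition by blast
  obtain e' u' where y: "e' \<in> even_part W" "u' \<in> W 3" "y = e' + u'"
    using even_odd_decomposition by blast
  have "x + y = (e + e') + (u + u')" using x y by (simp add: algebra_simps)
  also have "miyamoto W \<dots> = (e + e') - (u + u')"
    using x y subspace_eigenspace[of 3]
    by (simp add: miyamoto_even_odd subspace_add[OF subspace_even_part] subspace_add)
  also have "\<dots> = miyamoto W x + miyamoto W y"
    using x y by (simp add: miyamoto_even_odd algebra_simps)
  finally show ?thesis .
qed

lemma miyamoto_scale: "miyamoto W (smul c x) = smul c (miyamoto W x)"
proof -
  obtain e u where x: "e \<in> even_part W" "u \<in> W 3" "x = e + u"
    using even_odd_decomposition by blast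
  have "smul c x = smul c e + smul c u" using x by (simp add: scale_right_distrib)
  also have "miyamoto W \<dots> = smul c e - smul c u"
    using x subspace_eigenspace[of 3]
    by (simp add: miyamoto_even_odd subspace_scale[OF subspace_even_part] subspace_scale)
  also have "\<dots> = smul c (miyamoto W x)"
    using x by (simp add: miyamoto_even_odd scale_right_diff_distrib)
  finally show ?thesis .
qed

text \<open>The fusion rules make \<open>even_part W\<close> and \<open>W 3\<close> a \<open>\<int>/2\<close>-grading of the algebra.\<close>

lemma miyamoto_mult: "miyamoto W (mult x y) = mult (miyamoto W x) (miyamoto W y)"
proof -
  obtain e u where x: "e \<in> even_part W" "u \<in> W 3" "x = e + u"
    using even_odd_decomposition by blast
  obtain e' u' where y: "e' \<in> even_part W" "u' \<in> W 3" "y = e' + u'"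
    using even_odd_decomposition by blast
  have "mult x y = (mult e e' + mult u u') + (mult e u' + mult e' u)"
    using x y by (simp add: mult_add_left mult_add_right mult_commute[of u e'] algebra_simps)
  also have "miyamoto W \<dots> = (mult e e' + mult u u') - (mult e u' + mult e' u)"
    using x y subspace_eigenspace[of 3]
    by (simp add: miyamoto_even_odd mult_even_even mult_eigenspace_33 mult_even_odd
        subspace_add[OF subspace_even_part] subspace_add)
  also have "\<dots> = mult (e - u) (e' - u')"
    by (simp add: mult_diff_left mult_diff_right mult_commute[of u e'] algebra_simps)
  also have "\<dots> = mult (miyamoto W x) (miyamoto W y)"
    using x y by (simp add: miyamoto_even_odd)
  finally show ?thesis .
qed

lemma alg_hom_miyamoto: "alg_hom (miyamoto W)"
  unfolding alg_hom_def module_hom_iff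
  by (simp add: module_axioms miyamoto_add miyamoto_scale miyamoto_mult)

end

section \<open>Finitely supported linear combinations\<close>

lemma sum_int_symmetric_interval:
  fixes f :: "int \<Rightarrow> 'a::comm_monoid_add"
  shows "(\<Sum>j = - int n..int n. f j) = f 0 + (\<Sum>i = 1..n. f (int i) + f (- int i))"
proof (induction n)
  case (Suc n)
  have "{- int (Suc n)..int (Suc n)} = insert (int (Suc n)) (insert (- int (Suc n)) {- int n..int n})"
    by auto
  then show ?case using Suc by (simp add: ac_simps)
qed simp

lemma sum_int_shifted_symmetric_interval:
  fixes f :: "int \<Rightarrow> 'a::comm_monoid_add"
  shows "(\<Sum>j = - int n..int n + 1. f j) = (\<Sum>i = 0..n. f (int i + 1) + f (- int i))"
proof (induction n)
  case 0
  have "{0..1::int} = {0, 1}" by auto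
  then show ?case by (simp add: add.commute)
next
  case (Suc n)
  have "{- int (Suc n)..int (Suc n) + 1} =
      insert (int (Suc n) + 1) (insert (- int (Suc n)) {- int n..int n + 1})"
    by auto
  then show ?case using Suc by (simp add: ac_simps)
qed

text \<open>A sum over the support of the summand: it is \<open>0\<close> when that support is infinite.\<close>

definition lincomb :: "('f \<Rightarrow> 'm \<Rightarrow> 'm::comm_monoid_add) \<Rightarrow> ('i \<Rightarrow> 'f) \<Rightarrow> ('i \<Rightarrow> 'm) \<Rightarrow> 'm" where
  "lincomb smul c v = Sum_any (\<lambda>j. smul (c j) (v j))"

lemma finite_support_shift:
  fixes \<beta> :: "int \<Rightarrow> 'a::zero"
  assumes "finite {j. \<beta> j \<noteq> 0}"
  shows "finite {j. \<beta> (j - s) \<noteq> 0}"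
proof -
  have "{j. \<beta> (j - s) \<noteq> 0} = (\<lambda>j. j - s) -` {j. \<beta> j \<noteq> 0}" by auto
  then show ?thesis using finite_vimageI[OF assms bij_is_inj[OF bij_diff_right]] by simp
qed

lemma finite_support_diff:
  fixes f g :: "'i \<Rightarrow> 'a::ab_group_add"
  assumes "finite {j. f j \<noteq> 0}" "finite {j. g j \<noteq> 0}"
  shows "finite {j. f j - g j \<noteq> 0}"
  by (rule finite_subset[of _ "{j. f j \<noteq> 0} \<union> {j. g j \<noteq> 0}"]) (use assms in auto)

lemma even_extension_support:
  assumes "\<forall>i>k. \<alpha> i = 0"
  shows "{j. \<alpha> (nat \<bar>j\<bar>) \<noteq> 0} \<subseteq> {- int k..int k}"
proof
  fix j assume "j \<in> {j. \<alpha> (nat \<bar>j\<bar>) \<noteq> 0}"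
  then have "nat \<bar>j\<bar> \<le> k" using assms not_le by auto
  then show "j \<in> {- int k..int k}" by (auto simp: nat_le_iff abs_le_iff)
qed

lemma even_extension_vanishes:
  "\<forall>i>k. \<alpha> i = 0 \<Longrightarrow> int k < \<bar>j\<bar> \<Longrightarrow> \<alpha> (nat \<bar>j\<bar>) = 0"
  by (simp add: zless_nat_eq_int_zless)

lemma finite_support_even_extension:
  assumes "\<forall>i>k. \<alpha> i = 0"
  shows "finite {j. \<alpha> (nat \<bar>j\<bar>) \<noteq> 0}"
  using even_extension_support[OF assms] by (rule finite_subset) simp

context vector_space
begin

lemma lincomb_eq_sum:
  assumes "finite A" "{j. c j \<noteq> 0} \<subseteq> A"
  shows "lincomb scale c v = (\<Sum>j\<in>A. scale (c j) (v j))"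
  unfolding lincomb_def using assms by (intro Sum_any.expand_superset) auto

lemma lincomb_add:
  assumes "finite {j. c j \<noteq> 0}" "finite {j. d j \<noteq> 0}"
  shows "lincomb scale (\<lambda>j. c j + d j) v = lincomb scale c v + lincomb scale d v"
proof -
  let ?A = "{j. c j \<noteq> 0} \<union> {j. d j \<noteq> 0}"
  have "lincomb scale (\<lambda>j. c j + d j) v = (\<Sum>j\<in>?A. scale (c j + d j) (v j))"
    using assms by (intro lincomb_eq_sum) auto
  also have "\<dots> = lincomb scale c v + lincomb scale d v"
    using assms by (simp add: lincomb_eq_sum[of ?A] scale_left_distrib sum.distrib)
  finally show ?thesis .
qed

lemma lincomb_diff:
  assumes "finite {j. c j \<noteq> 0}" "finite {j. d j \<noteq> 0}"
  shows "lincomb scale (\<lambda>j. c j - d j) v = lincomb scale c v - lincomb scale d v"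
proof -
  let ?A = "{j. c j \<noteq> 0} \<union> {j. d j \<noteq> 0}"
  have "lincomb scale (\<lambda>j. c j - d j) v = (\<Sum>j\<in>?A. scale (c j - d j) (v j))"
    using assms by (intro lincomb_eq_sum) auto
  also have "\<dots> = lincomb scale c v - lincomb scale d v"
    using assms by (simp add: lincomb_eq_sum[of ?A] scale_left_diff_distrib sum_subtractf)
  finally show ?thesis .
qed

lemma module_hom_lincomb:
  assumes "module_hom scale scale L" "finite {j. c j \<noteq> 0}"
  shows "L (lincomb scale c v) = lincomb scale c (\<lambda>j. L (v j))"
  using assms by (simp add: lincomb_eq_sum[OF assms(2)] module_hom.sum module_hom.scale)

lemma lincomb_shift:
  fixes c :: "int \<Rightarrow> 'a"
  shows "lincomb scale c (\<lambda>j. v (j + s)) = lincomb scale (\<lambda>j. c (j - s)) v"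
  unfolding lincomb_def by (rule Sum_any.reindex_cong[OF bij_diff_right[of s]]) (simp add: fun_eq_iff)

lemma lincomb_antisymmetric:
  fixes c :: "int \<Rightarrow> 'a"
  assumes "c 0 = 0" "\<And>j. c (- j) = - c j" "{j. c j \<noteq> 0} \<subseteq> {- int n..int n}"
  shows "lincomb scale c v = (\<Sum>i = 1..n. scale (c (int i)) (v (int i) - v (- int i)))"
  using assms
  by (simp add: lincomb_eq_sum[OF _ assms(3)] sum_int_symmetric_interval scale_right_diff_distrib)

lemma lincomb_antisymmetric_shifted:
  fixes c :: "int \<Rightarrow> 'a"
  assumes "\<And>j. c (1 - j) = - c j" "{j. c j \<noteq> 0} \<subseteq> {- int n..int n + 1}"
  shows "lincomb scale c v = (\<Sum>i = 0..n. scale (c (int i + 1)) (v (int i + 1) - v (- int i)))"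
proof -
  have "c (- int i) = - c (int i + 1)" for i using assms(1)[of "int i + 1"] by simp
  then show ?thesis
    by (simp add: lincomb_eq_sum[OF _ assms(2)] sum_int_shifted_symmetric_interval
        scale_right_diff_distrib)
qed

lemma lincomb_even_extension:
  assumes "{j. \<alpha> (nat \<bar>j\<bar>) \<noteq> 0} \<subseteq> {- int k..int k}"
  shows "(\<Sum>i = 1..k. scale (\<alpha> i) (v (int i) + v (- int i))) + scale (\<alpha> 0) (v 0)
    = lincomb scale (\<lambda>j. \<alpha> (nat \<bar>j\<bar>)) v"
  by (simp add: lincomb_eq_sum[OF _ assms] sum_int_symmetric_interval scale_right_distrib add.commute)

end

section \<open>Dihedral algebras and their shift automorphisms\<close>

lemma automorphism_comp:
  "is_automorphism smul mult g \<Longrightarrow> is_automorphism smul mult h \<Longrightarrow> is_automorphism smul mult (g \<circ> h)"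
  unfolding is_automorphism_def by (simp add: bij_comp)

lemma automorphism_inv:
  assumes "is_automorphism smul mult g"
  shows "is_automorphism smul mult (inv g)"
proof -
  have "bij g" using assms unfolding is_automorphism_def by blast
  then have g_inv: "g (inv g y) = y" and inj: "g x = g x' \<Longrightarrow> x = x'" for x x' y
    by (simp_all add: bij_is_surj surj_f_inv_f bij_is_inj inj_eq)
  have "inv g (x + y) = inv g x + inv g y" "inv g (smul c x) = smul c (inv g x)"
    "inv g (mult x y) = mult (inv g x) (inv g y)" for x y c
    using assms g_inv inj unfolding is_automorphism_def by metis+
  then show ?thesis unfolding is_automorphism_def using \<open>bij g\<close> bij_imp_bij_inv by blast
qed

lemma automorphism_funpow:
  "is_automorphism smul mult g \<Longrightarrow> is_automorphism smul mult (g ^^ n)"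
proof (induction n)
  case 0
  then show ?case unfolding is_automorphism_def by simp
qed (simp add: automorphism_comp)

locale dihedral_algebra = nonassoc_comm_algebra smul mult
  for smul :: "'f::field \<Rightarrow> 'm::ab_group_add \<Rightarrow> 'm" and mult +
  fixes eta :: 'f and a :: "int \<Rightarrow> 'm" and V :: "int \<Rightarrow> nat \<Rightarrow> 'm set"
  assumes dihedral: "dihedral smul mult eta a V"

lemma dihedral_algebraI:
  assumes "dihedral smul mult eta a V"
  shows "dihedral_algebra smul mult eta a V"
proof -
  have "comm_algebra smul mult" using assms unfolding dihedral_def by blast
  then have "nonassoc_comm_algebra smul mult"
    unfolding comm_algebra_def nonassoc_comm_algebra_def nonassoc_comm_algebra_axioms_def by blast
  then show ?thesis using assms by (simp add: dihedral_algebra_def dihedral_algebra_axioms_def)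
qed

context dihedral_algebra
begin

abbreviation shift :: "int \<Rightarrow> 'm \<Rightarrow> 'm" where
  "shift i \<equiv> shift_aut smul mult a i"

abbreviation tau0 :: "'m \<Rightarrow> 'm" where
  "tau0 \<equiv> miyamoto (V 0)"

lemma alg_hom_eqI:
  assumes "alg_hom g" "alg_hom h" "\<And>j. g (a j) = h (a j)"
  shows "g = h"
proof
  fix u
  have gen: "u \<in> gen_subalg smul mult (range a)" using dihedral unfolding dihedral_def by blast
  show "g u = h u" by (rule alg_hom_eq_on_gen_subalg[OF assms(1,2) _ gen]) (use assms(3) in auto)
qed

lemma shift_aut_characterization:
  "is_automorphism smul mult (shift i) \<and> (\<forall>j. shift i (a j) = a (i + j))"
proof -
  obtain g where g: "is_automorphism smul mult g" "\<And>j. g (a j) = a (j + 1)"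
    using dihedral unfolding dihedral_def by blast
  have "bij g" using g(1) unfolding is_automorphism_def by blast
  have g_inv: "inv g (a j) = a (j - 1)" for j
    using bij_inv_eq_iff[OF \<open>bij g\<close>, of "a (j - 1)" "a j"] g(2)[of "j - 1"] by simp
  have pow: "(g ^^ n) (a j) = a (j + int n)" for n j
    by (induction n arbitrary: j) (simp_all add: g(2) algebra_simps)
  have inv_pow: "(inv g ^^ n) (a j) = a (j - int n)" for n j
    by (induction n arbitrary: j) (simp_all add: g_inv algebra_simps)
  define h where "h = (if 0 \<le> i then g ^^ nat i else inv g ^^ nat (- i))"
  have "is_automorphism smul mult h"
    unfolding h_def using g(1) automorphism_inv[OF g(1)] by (simp add: automorphism_funpow)
  moreover have "h (a j) = a (i + j)" for j
    by (cases "0 \<le> i") (simp_all add: h_def pow inv_pow add.commute)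
  ultimately have h: "is_automorphism smul mult h \<and> (\<forall>j. h (a j) = a (i + j))" by blast
  have "g' = h" if "is_automorphism smul mult g' \<and> (\<forall>j. g' (a j) = a (i + j))" for g'
    using that h by (intro alg_hom_eqI) (simp_all add: automorphism_alg_hom)
  then show ?thesis
    unfolding shift_aut_def
    by (rule theI[where P = "\<lambda>g. is_automorphism smul mult g \<and> (\<forall>j. g (a j) = a (i + j))", OF h])
qed

lemma alg_hom_shift: "alg_hom (shift i)"
  using shift_aut_characterization automorphism_alg_hom by blast

lemma module_hom_shift: "module_hom smul smul (shift i)"
  using alg_hom_shift unfolding alg_hom_def by blast

lemma shift_add: "shift i (u + w) = shift i u + shift i w"
  by (rule module_hom.add[OF module_hom_shift])

lemma shift_axis [simp]: "shift i (a j) = a (i + j)"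
  using shift_aut_characterization by blast

lemma shift_shift: "shift i (shift j x) = shift (i + j) x"
proof -
  have "shift i \<circ> shift j = shift (i + j)"
    by (rule alg_hom_eqI) (simp_all add: alg_hom_comp alg_hom_shift add.assoc)
  then show ?thesis by (metis comp_apply)
qed

lemma shift_0 [simp]: "shift 0 x = x"
proof -
  have "shift 0 = id" by (rule alg_hom_eqI) (simp_all add: alg_hom_id alg_hom_shift)
  then show ?thesis by simp
qed

lemma alg_hom_tau0: "alg_hom tau0"
proof -
  have "is_axis smul mult eta (a 0) (V 0)" using dihedral unfolding dihedral_def by blast
  then interpret V0: axis smul mult eta "a 0" "V 0"
    by (simp add: axis_def axis_axioms_def nonassoc_comm_algebra_axioms)
  show ?thesis by (rule V0.alg_hom_miyamoto)
qed

lemma tau0_axis: "tau0 (a j) = a (- j)"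
  using dihedral unfolding dihedral_def by simp

lemma tau0_shift: "tau0 (shift i x) = shift (- i) (tau0 x)"
proof -
  have "tau0 \<circ> shift i = shift (- i) \<circ> tau0"
    by (rule alg_hom_eqI) (simp_all add: alg_hom_comp alg_hom_shift alg_hom_tau0 tau0_axis)
  then show ?thesis by (metis comp_apply)
qed

lemma shift_lincomb:
  assumes "finite {j. \<beta> j \<noteq> 0}"
  shows "shift s (lincomb smul \<beta> a) = lincomb smul (\<lambda>j. \<beta> (j - s)) a"
proof -
  have "shift s (lincomb smul \<beta> a) = lincomb smul \<beta> (\<lambda>j. a (j + s))"
    using module_hom_lincomb[OF module_hom_shift assms] by (simp add: add.commute)
  also have "\<dots> = lincomb smul (\<lambda>j. \<beta> (j - s)) a" by (rule lincomb_shift)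
  finally show ?thesis .
qed

lemma lincomb_shift_diff:
  assumes "v + lincomb smul \<beta> a = 0" "finite {j. \<beta> j \<noteq> 0}"
  shows "lincomb smul (\<lambda>j. \<beta> (j - s) - \<beta> (j - t)) a = shift t v - shift s v"
proof -
  have "lincomb smul \<beta> a = - v" using assms(1) by (simp add: eq_neg_iff_add_eq_0 add.commute)
  moreover have "lincomb smul (\<lambda>j. \<beta> (j - s) - \<beta> (j - t)) a
      = shift s (lincomb smul \<beta> a) - shift t (lincomb smul \<beta> a)"
    using assms(2) by (simp add: lincomb_diff finite_support_shift shift_lincomb)
  ultimately show ?thesis by (simp add: module_hom.neg[OF module_hom_shift])
qed

lemma shift_fixed: "shift 1 u = u \<Longrightarrow> shift i u = u"
proof (induction i rule: int_induct[where k = 0])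
  case (step1 i)
  then show ?case by (metis shift_shift add.commute)
next
  case (step2 i)
  then show ?case by (metis shift_shift diff_add_cancel)
qed simp

lemma shift_balance_of_period_3:
  assumes "shift 3 y = y" "tau0 (shift 1 y) = shift 2 y" "tau0 y = y"
  shows "shift 1 y + shift 2 y = shift (- 1) y + shift (- 2) y"
proof -
  have "shift (- 1) y = shift 2 y" using tau0_shift[of 1 y] assms(2,3) by simp
  moreover have "shift (- 2) y = shift 1 y" using shift_shift[of "- 2" 3 y] assms(1) by simp
  ultimately show ?thesis by (simp add: add.commute)
qed

lemma shift_reflection_of_tau0_fixed:
  assumes "tau0 z = z" "tau0 (shift 1 z) = shift 1 z"
  shows "shift (- 1) z = shift 1 z" and "shift 2 z = z" and "shift (- 2) z = z"
proof -
  show reflect: "shift (- 1) z = shift 1 z" using tau0_shift[of 1 z] assms by simp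
  have "shift 2 z = shift 1 (tau0 (shift 1 z))" using assms(2) shift_shift[of 1 1 z] by simp
  also have "\<dots> = z" using tau0_shift[of "- 1" "shift 1 z"] shift_shift[of "- 1" 1 z] assms(1) by simp
  finally show period: "shift 2 z = z" .
  show "shift (- 2) z = z" using tau0_shift[of 2 z] assms(1) period by simp
qed

lemma shift_fixed_of_gen_group:
  assumes "\<forall>g \<in> gen_group {shift 1, tau0}. g x = x"
  shows "shift i x = x"
proof -
  have "shift 1 \<in> gen_group {shift 1, tau0}" by (rule gen_group.gen) simp
  then have "shift 1 x = x" using assms by blast
  then show ?thesis by (rule shift_fixed)
qed

lemma shift_balance_of_components:
  assumes "\<And>i. shift i x = x"
    and "shift 3 y = y" "tau0 (shift 1 y) = shift 2 y" "tau0 y = y"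
    and "tau0 z = z" "tau0 (shift 1 z) = shift 1 z"
  shows "shift 1 (x + y + z) + shift 2 (x + y + z) = shift (- 1) (x + y + z) + shift (- 2) (x + y + z)"
proof -
  have "shift 1 (x + y + z) + shift 2 (x + y + z)
      = (x + x) + (shift 1 y + shift 2 y) + (shift 1 z + shift 2 z)"
    by (simp add: shift_add assms(1) ac_simps)
  also have "\<dots> = (x + x) + (shift (- 1) y + shift (- 2) y) + (shift (- 1) z + shift (- 2) z)"
    using shift_balance_of_period_3[OF assms(2-4)] shift_reflection_of_tau0_fixed[OF assms(5,6)]
    by simp
  also have "\<dots> = shift (- 1) (x + y + z) + shift (- 2) (x + y + z)"
    by (simp add: shift_add assms(1) ac_simps)
  finally show ?thesis .
qed

section \<open>Axial dimension\<close>

lemma shift_span_axes: "shift i ` span (a ` I) = span (a ` (+) i ` I)"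
proof -
  have "shift i ` span (a ` I) = span (shift i ` a ` I)"
    by (rule module_hom.span_image[OF module_hom_shift, symmetric])
  then show ?thesis by (simp add: image_image)
qed

lemma shift_invariant:
  assumes "shift 1 ` S \<subseteq> S" "shift (- 1) ` S \<subseteq> S"
  shows "shift i ` S \<subseteq> S"
proof (induction i rule: int_induct[where k = 0])
  case (step1 i)
  have "shift (i + 1) ` S = shift 1 ` shift i ` S"
    by (simp add: image_image shift_shift add.commute)
  then show ?case using step1 assms(1) by blast
next
  case (step2 i)
  have "shift (i - 1) ` S = shift (- 1) ` shift i ` S"
    by (simp add: image_image shift_shift)
  then show ?case using step2 assms(2) by blast
qed simp

text \<open>The span of a window of consecutive axes is invariant under \<open>f\<^sub>1\<close> and \<open>f\<^sub>-\<^sub>1\<close>.\<close>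

lemma span_axes_window:
  assumes "p \<le> q" "a (q + 1) - a p \<in> span (a ` {p + 1..q})"
  shows "range a \<subseteq> span (a ` {p..q})"
proof -
  let ?S = "span (a ` {p..q})"
  have window: "a j \<in> ?S" if "p \<le> j" "j \<le> q" for j
    using that by (auto intro: span_base)
  have "span (a ` {p + 1..q}) \<subseteq> ?S" by (rule span_mono) auto
  then have "a (q + 1) - a p \<in> ?S" using assms(2) by blast
  from span_add[OF this window[of p]] have top: "a (q + 1) \<in> ?S" using assms(1) by simp
  have window_invariant: "shift i ` ?S \<subseteq> ?S" if "\<And>j. j \<in> {p..q} \<Longrightarrow> a (i + j) \<in> ?S" for i
  proof -
    have "a ` (+) i ` {p..q} \<subseteq> ?S" using that by blast
    then show ?thesis unfolding shift_span_axes by (rule span_minimal) simp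
  qed
  have "a (1 + j) \<in> ?S" if "j \<in> {p..q}" for j
    using that top window[of "1 + j"] by (cases "j = q") (auto simp: add.commute)
  then have up: "shift 1 ` ?S \<subseteq> ?S" by (rule window_invariant)
  have "shift (- 1) ` span (a ` {p + 1..q}) \<subseteq> ?S"
    unfolding shift_span_axes by (intro span_mono) auto
  moreover have "shift (- 1) (a (q + 1) - a p) = a q - a (p - 1)"
    by (simp add: module_hom.diff[OF module_hom_shift])
  ultimately have "a q - a (p - 1) \<in> ?S"
    using imageI[OF assms(2), of "shift (- 1)"] by auto
  from span_diff[OF window[of q] this] have bottom: "a (p - 1) \<in> ?S" using assms(1) by simp
  have "a (- 1 + j) \<in> ?S" if "j \<in> {p..q}" for j
    using that bottom window[of "- 1 + j"] by (cases "j = p") auto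
  then have down: "shift (- 1) ` ?S \<subseteq> ?S" by (rule window_invariant)
  have invariant: "shift i ` ?S \<subseteq> ?S" for i using up down by (rule shift_invariant)
  show ?thesis
  proof
    fix u assume "u \<in> range a"
    then obtain j where "u = shift (j - p) (a p)" by auto
    then show "u \<in> ?S" using invariant window[of p] assms(1) by blast
  qed
qed

lemma adim_le_card:
  assumes "finite I" "range a \<subseteq> span (a ` I)"
  shows "adim smul a \<le> enat (card I)"
proof -
  obtain B where B: "B \<subseteq> range a" "independent B" "range a \<subseteq> span B" "card B = dim (range a)"
    by (rule basis_exists)
  have "B \<subseteq> span (a ` I)" using B(1) assms(2) by (rule subset_trans)
  then have "finite B" using independent_span_bound[OF finite_imageI[OF assms(1)] B(2)] by blast
  moreover have "B \<subseteq> span (range a)" using B(1) span_superset by blast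
  then have "span B = span (range a)" using B(3) by (simp add: span_eq)
  ultimately have "\<exists>B. finite B \<and> \<not> dependent B \<and> span B = span (range a)"
    using B(2) by blast
  then have "adim smul a = enat (dim (range a))"
    unfolding adim_def by (rule if_P)
  moreover have "dim (range a) \<le> card (a ` I)" using dim_le_card assms by blast
  then have "dim (range a) \<le> card I" using card_image_le[OF assms(1), of a] by linarith
  ultimately show ?thesis by simp
qed

lemma adim_le_of_relation:
  assumes "p \<le> q" "c \<noteq> 0" "smul c (a (q + 1) - a p) + w = 0" "w \<in> span (a ` {p + 1..q})"
  shows "adim smul a \<le> enat (nat (q - p + 1))"
proof -
  have "a (q + 1) - a p = smul (inverse c) (smul c (a (q + 1) - a p))"
    using assms(2) by simp
  also have "smul c (a (q + 1) - a p) = - w"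
    using assms(3) by (simp add: eq_neg_iff_add_eq_0)
  finally have "a (q + 1) - a p \<in> span (a ` {p + 1..q})"
    using assms(4) by (simp add: span_scale span_neg)
  then have "range a \<subseteq> span (a ` {p..q})"
    using assms(1) by (rule span_axes_window[rotated])
  then show ?thesis using adim_le_card[of "{p..q}"] by simp
qed

lemma even_relation_consequences:
  assumes "c \<noteq> 0"
    and rel: "smul c (a (int m + 1) - a (- int m - 1))
      + (\<Sum>i = 1..m. smul (\<gamma> i) (a (int i) - a (- int i))) = 0"
  shows "adim smul a \<le> enat (2 * m + 2)
    \<and> (adim smul a = enat (2 * m + 2) \<longrightarrow> odd_relation smul a)"
proof
  have "(\<Sum>i = 1..m. smul (\<gamma> i) (a (int i) - a (- int i))) \<in> span (a ` {- int m - 1 + 1..int m})"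
    by (intro span_sum span_scale span_diff span_base) auto
  from adim_le_of_relation[OF _ assms(1) rel this]
  show "adim smul a \<le> enat (2 * m + 2)" by (simp add: nat_add_distrib nat_mult_distrib)
  let ?\<beta> = "\<gamma>(m + 1 := c)"
  have outer: "- int m - 1 = - int (m + 1)" by simp
  have "(\<Sum>i = 1..m + 1. smul (?\<beta> i) (a (int i) - a (- int i))) = 0"
    using rel[unfolded outer] by (simp add: add.commute)
  then show "adim smul a = enat (2 * m + 2) \<longrightarrow> odd_relation smul a"
    unfolding odd_relation_def using assms(1)
    by (intro impI disjI1 exI[of _ "m + 1"] conjI exI[of _ ?\<beta>]) simp_all
qed

lemma odd_relation_consequences:
  assumes "c \<noteq> 0"
    and rel: "smul c (a (int m + 1) - a (- int m))
      + (\<Sum>i = 0..<m. smul (\<gamma> i) (a (int i + 1) - a (- int i))) = 0"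
  shows "adim smul a \<le> enat (2 * m + 1)
    \<and> (adim smul a = enat (2 * m + 1) \<longrightarrow> odd_relation smul a)"
proof
  have "(\<Sum>i = 0..<m. smul (\<gamma> i) (a (int i + 1) - a (- int i))) \<in> span (a ` {- int m + 1..int m})"
    by (intro span_sum span_scale span_diff span_base) auto
  from adim_le_of_relation[OF _ assms(1) rel this]
  show "adim smul a \<le> enat (2 * m + 1)" by (simp add: nat_add_distrib nat_mult_distrib)
  let ?\<beta> = "\<gamma>(m := c)"
  have "(\<Sum>i = 0..m. smul (?\<beta> i) (a (int i + 1) - a (- int i))) = 0"
    using rel by (simp add: atLeastLessThanSuc_atLeastAtMost[symmetric] add.commute)
  then show "adim smul a = enat (2 * m + 1) \<longrightarrow> odd_relation smul a"
    unfolding odd_relation_def using assms(1)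
    by (intro impI disjI2 exI[of _ m] conjI exI[of _ ?\<beta>]) simp_all
qed

end

section \<open>Relations among the axes\<close>

context dihedral_algebra
begin

text \<open>\<open>\<lambda>j. \<alpha> (nat \<bar>j\<bar>)\<close> is the even extension of \<open>\<alpha>\<close> to \<open>\<int>\<close>, so \<open>relation\<close> is hypothesis (iv).\<close>

context
  fixes v :: 'm and \<alpha> :: "nat \<Rightarrow> 'f" and k :: nat
  assumes relation: "v + lincomb smul (\<lambda>j. \<alpha> (nat \<bar>j\<bar>)) a = 0"
    and vanish: "\<forall>i>k. \<alpha> i = 0"
begin

lemma lincomb_reflected_shift:
  "lincomb smul (\<lambda>j. \<alpha> (nat \<bar>j - s\<bar>) - \<alpha> (nat \<bar>j + s\<bar>)) a = shift (- s) v - shift s v"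
  using lincomb_shift_diff[OF relation finite_support_even_extension[OF vanish], of s "- s"] by simp

lemma finite_support_reflected: "finite {j. \<alpha> (nat \<bar>j - s\<bar>) - \<alpha> (nat \<bar>j + s\<bar>) \<noteq> 0}"
  using finite_support_diff[OF finite_support_shift[OF finite_support_even_extension[OF vanish], of s]
      finite_support_shift[OF finite_support_even_extension[OF vanish], of "- s"]]
  by simp

lemma relation_of_shift_balance:
  assumes "shift 1 v + shift 2 v = shift (- 1) v + shift (- 2) v"
  shows "smul (\<alpha> k) (a (int k + 2) - a (- int k - 2))
    + (\<Sum>i = 1..k + 1. smul ((if i = 1 then \<alpha> 1 else \<alpha> (i - 2)) + \<alpha> (i - 1) - \<alpha> (i + 1) - \<alpha> (i + 2))
        (a (int i) - a (- int i))) = 0"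
proof -
  define e where
    "e j = \<alpha> (nat \<bar>j - 2\<bar>) + \<alpha> (nat \<bar>j - 1\<bar>) - \<alpha> (nat \<bar>j + 1\<bar>) - \<alpha> (nat \<bar>j + 2\<bar>)" for j
  have "e = (\<lambda>j. (\<alpha> (nat \<bar>j - 1\<bar>) - \<alpha> (nat \<bar>j + 1\<bar>)) + (\<alpha> (nat \<bar>j - 2\<bar>) - \<alpha> (nat \<bar>j + 2\<bar>)))"
    by (simp add: e_def fun_eq_iff algebra_simps)
  then have "lincomb smul e a = (shift (- 1) v - shift 1 v) + (shift (- 2) v - shift 2 v)"
    using lincomb_add[OF finite_support_reflected finite_support_reflected]
    by (simp add: lincomb_reflected_shift)
  then have "lincomb smul e a = 0" using assms by (simp add: algebra_simps)
  moreover have "lincomb smul e a = (\<Sum>i = 1..k + 2. smul (e (int i)) (a (int i) - a (- int i)))"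
  proof (rule lincomb_antisymmetric)
    show "e 0 = 0" by (simp add: e_def)
    have abs_reflect: "\<bar>- j - d\<bar> = \<bar>j + d\<bar>" "\<bar>1 - j\<bar> = \<bar>j - 1\<bar>" "\<bar>2 - j\<bar> = \<bar>j - 2\<bar>"
      for j d :: int by arith+
    show "e (- j) = - e j" for j by (simp add: e_def abs_reflect)
    show "{j. e j \<noteq> 0} \<subseteq> {- int (k + 2)..int (k + 2)}"
    proof (rule subsetI, rule ccontr)
      fix j assume "j \<in> {j. e j \<noteq> 0}" "j \<notin> {- int (k + 2)..int (k + 2)}"
      then have "int k < \<bar>j - 2\<bar>" "int k < \<bar>j - 1\<bar>" "int k < \<bar>j + 1\<bar>" "int k < \<bar>j + 2\<bar>" "e j \<noteq> 0"
        by auto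
      then show False by (simp add: e_def even_extension_vanishes[OF vanish])
    qed
  qed
  moreover have "e (int i) = (if i = 1 then \<alpha> 1 else \<alpha> (i - 2)) + \<alpha> (i - 1) - \<alpha> (i + 1) - \<alpha> (i + 2)"
    if "i \<ge> 1" for i
    using that by (cases "i = 1") (simp_all add: e_def nat_diff_distrib nat_add_distrib eval_nat_numeral)
  moreover have "e (int (k + 2)) = \<alpha> k" using vanish by (simp add: e_def nat_add_distrib)
  moreover have "- 2 - int k = - int k - 2" by simp
  ultimately show ?thesis using vanish by (simp add: algebra_simps numeral_2_eq_2)
qed

lemma relation_of_reflection_symmetry:
  assumes "shift 1 v = shift (- 1) v"
  shows "smul (\<alpha> k) (a (int k + 1) - a (- int k - 1))
    + (\<Sum>i = 1..k. smul (\<alpha> (i - 1) - \<alpha> (i + 1)) (a (int i) - a (- int i))) = 0"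
proof -
  define e where "e j = \<alpha> (nat \<bar>j - 1\<bar>) - \<alpha> (nat \<bar>j + 1\<bar>)" for j
  have "lincomb smul e a = 0"
    using lincomb_reflected_shift[of 1] assms unfolding e_def by simp
  moreover have "lincomb smul e a = (\<Sum>i = 1..k + 1. smul (e (int i)) (a (int i) - a (- int i)))"
  proof (rule lincomb_antisymmetric)
    show "e 0 = 0" by (simp add: e_def)
    have abs_reflect: "\<bar>- j - 1\<bar> = \<bar>j + 1\<bar>" "\<bar>1 - j\<bar> = \<bar>j - 1\<bar>" for j :: int
      by arith+
    show "e (- j) = - e j" for j by (simp add: e_def abs_reflect)
    show "{j. e j \<noteq> 0} \<subseteq> {- int (k + 1)..int (k + 1)}"
    proof (rule subsetI, rule ccontr)
      fix j assume "j \<in> {j. e j \<noteq> 0}" "j \<notin> {- int (k + 1)..int (k + 1)}"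
      then have "int k < \<bar>j - 1\<bar>" "int k < \<bar>j + 1\<bar>" "e j \<noteq> 0" by auto
      then show False by (simp add: e_def even_extension_vanishes[OF vanish])
    qed
  qed
  moreover have "e (int i) = \<alpha> (i - 1) - \<alpha> (i + 1)" if "i \<ge> 1" for i
    using that by (simp add: e_def nat_diff_distrib nat_add_distrib)
  moreover have "e (int (k + 1)) = \<alpha> k" using vanish by (simp add: e_def)
  moreover have "- 1 - int k = - int k - 1" by simp
  ultimately show ?thesis using vanish by (simp add: algebra_simps)
qed

lemma relation_of_shift_invariance:
  assumes "shift 1 v = v"
  shows "smul (\<alpha> k) (a (int k + 1) - a (- int k))
    + (\<Sum>i = 0..<k. smul (\<alpha> i - \<alpha> (i + 1)) (a (int i + 1) - a (- int i))) = 0"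
proof -
  define e where "e j = \<alpha> (nat \<bar>j - 1\<bar>) - \<alpha> (nat \<bar>j\<bar>)" for j
  have "lincomb smul e a = 0"
    using lincomb_shift_diff[OF relation finite_support_even_extension[OF vanish], of 1 0] assms
    unfolding e_def by simp
  moreover have "lincomb smul e a = (\<Sum>i = 0..k. smul (e (int i + 1)) (a (int i + 1) - a (- int i)))"
  proof (rule lincomb_antisymmetric_shifted)
    have abs_reflect: "\<bar>1 - j\<bar> = \<bar>j - 1\<bar>" for j :: int by arith
    show "e (1 - j) = - e j" for j by (simp add: e_def abs_reflect)
    show "{j. e j \<noteq> 0} \<subseteq> {- int k..int k + 1}"
    proof (rule subsetI, rule ccontr)
      fix j assume "j \<in> {j. e j \<noteq> 0}" "j \<notin> {- int k..int k + 1}"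
      then have "int k < \<bar>j - 1\<bar>" "int k < \<bar>j\<bar>" "e j \<noteq> 0" by auto
      then show False by (simp add: e_def even_extension_vanishes[OF vanish])
    qed
  qed
  moreover have "e (int i + 1) = \<alpha> i - \<alpha> (i + 1)" for i
    by (simp add: e_def nat_add_distrib)
  moreover have "{0..k} = insert k {0..<k}" by auto
  ultimately show ?thesis using vanish by (simp add: add.commute)
qed

end

end

theorem lemma2:
  fixes smul :: "'f::field \<Rightarrow> 'm::ab_group_add \<Rightarrow> 'm"
    and mult :: "'m \<Rightarrow> 'm \<Rightarrow> 'm"
    and eta :: 'f
    and a :: "int \<Rightarrow> 'm"
    and V :: "int \<Rightarrow> nat \<Rightarrow> 'm set"
    and x y z :: 'm
    and k :: nat
    and \<alpha> :: "nat \<Rightarrow> 'f"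
  assumes char: "(2::'f) \<noteq> 0"
    and eta: "eta \<noteq> 0" "eta \<noteq> 1" "eta \<noteq> 1 / 2"
    and dih: "dihedral smul mult eta a V"
    and hx: "\<forall>g \<in> gen_group {shift_aut smul mult a 1, miyamoto (V 0)}. g x = x"
    and hy: "shift_aut smul mult a 3 y = y"
            "miyamoto (V 0) (shift_aut smul mult a 1 y) = shift_aut smul mult a 2 y"
            "miyamoto (V 0) y = y"
    and hz: "miyamoto (V 0) z = z"
            "miyamoto (V 0) (shift_aut smul mult a 1 z) = shift_aut smul mult a 1 z"
    and hrel: "x + y + z + (\<Sum>i = 1..k. smul (\<alpha> i) (a (int i) + a (- int i)))
                 + smul (\<alpha> 0) (a 0) = 0"
    and hzero: "\<forall>i > k. \<alpha> i = 0"
  shows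
   "(smul (\<alpha> k) (a (int k + 2) - a (- int k - 2)) +
      (\<Sum>i = 1..k+1. smul ((if i = 1 then \<alpha> 1 else \<alpha> (i - 2)) + \<alpha> (i - 1) - \<alpha> (i + 1) - \<alpha> (i + 2))
                         (a (int i) - a (- int i))) = 0
     \<and> (\<alpha> k \<noteq> 0 \<longrightarrow> adim smul a \<le> enat (2 * k + 4)
                     \<and> (adim smul a = enat (2 * k + 4) \<longrightarrow> odd_relation smul a)))
  \<and> (y = 0 \<longrightarrow>
     smul (\<alpha> k) (a (int k + 1) - a (- int k - 1)) +
      (\<Sum>i = 1..k. smul (\<alpha> (i - 1) - \<alpha> (i + 1)) (a (int i) - a (- int i))) = 0
     \<and> (\<alpha> k \<noteq> 0 \<longrightarrow> adim smul a \<le> enat (2 * k + 2)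
                     \<and> (adim smul a = enat (2 * k + 2) \<longrightarrow> odd_relation smul a)))
  \<and> (y = 0 \<and> z = 0 \<longrightarrow>
     smul (\<alpha> k) (a (int k + 1) - a (- int k)) +
      (\<Sum>i = 0..<k. smul (\<alpha> i - \<alpha> (i + 1)) (a (int i + 1) - a (- int i))) = 0
     \<and> (\<alpha> k \<noteq> 0 \<longrightarrow> adim smul a \<le> enat (2 * k + 1)
                     \<and> (adim smul a = enat (2 * k + 1) \<longrightarrow> odd_relation smul a)))"
proof -
  interpret dihedral_algebra smul mult eta a V using dih by (rule dihedral_algebraI)
  let ?v = "x + y + z"
  have relation: "?v + lincomb smul (\<lambda>j. \<alpha> (nat \<bar>j\<bar>)) a = 0"
    using hrel lincomb_even_extension[OF even_extension_support[OF hzero]] by (simp add: add.assoc)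
  have x_fixed: "shift i x = x" for i using hx by (rule shift_fixed_of_gen_group)
  have "shift 1 ?v + shift 2 ?v = shift (- 1) ?v + shift (- 2) ?v"
    using x_fixed hy hz by (rule shift_balance_of_components)
  note balanced = relation_of_shift_balance[OF relation hzero this]
  have "y = 0 \<Longrightarrow> shift 1 ?v = shift (- 1) ?v"
    using shift_reflection_of_tau0_fixed(1)[OF hz] by (simp add: shift_add x_fixed)
  note reflected = relation_of_reflection_symmetry[OF relation hzero this]
  have "y = 0 \<Longrightarrow> z = 0 \<Longrightarrow> shift 1 ?v = ?v" by (simp add: x_fixed)
  note invariant = relation_of_shift_invariance[OF relation hzero this]
  have "int (k + 1) + 1 = int k + 2" "- int (k + 1) - 1 = - int k - 2" "2 * (k + 1) + 2 = 2 * k + 4"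
    by simp_all
  note consequences_1 = even_relation_consequences[of "\<alpha> k" "k + 1", unfolded this]
  show ?thesis
    using balanced consequences_1[OF _ balanced]
      reflected even_relation_consequences[OF _ reflected]
      invariant odd_relation_consequences[OF _ invariant]
    by blast
qed

end
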